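(* Let $f$ be a germ of a holomorphic function at the origin of $\mathbb C$, let $m\in\mathbb N$ and $k\in\mathbb N$. If for every $n\ge k$ there is $R_n\in\mathcal R_{nm}$ such that $f-R_n$ vanishes to order at least $n+m+2$ at the origin, then $f\in\mathcal R_{km}$ (i.e. $f$ is the germ of a function in $\mathcal R_{km}$).
   Context: $\mathcal R_{nm}$ is the set of rational functions $P/Q$ with $P$ a polynomial of degree at most $n$ and $Q\not\equiv0$ a polynomial of degree at most $m$. *)

theory Defs
  imports "HOL-Complex_Analysis.Complex_Analysis" "HOL-Computational_Algebra.Polynomial"
    "HOL-Library.Landau_Symbols"
begin

definition rat_fun :: "complex poly \<Rightarrow> complex poly \<Rightarrow> complex \<Rightarrow> complex" where
  "rat_fun P Q = (\<lambda>z. poly P z / poly Q z)"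

definition in_R :: "nat \<Rightarrow> nat \<Rightarrow> complex poly \<Rightarrow> complex poly \<Rightarrow> bool" where
  "in_R n m P Q \<longleftrightarrow> degree P \<le> n \<and> degree Q \<le> m \<and> Q \<noteq> 0"

text \<open>g vanishes to order at least N at the origin: g(z) = O(z^N) as z \<rightarrow> 0
  (punctured neighbourhood, so removable singularities of rational functions are harmless).\<close>
definition vanishes_to_order :: "(complex \<Rightarrow> complex) \<Rightarrow> nat \<Rightarrow> bool" where
  "vanishes_to_order g N \<longleftrightarrow> g \<in> O[at 0](\<lambda>z. z ^ N)"

end

theory Submission
  imports Defs
begin

text \<open>Two consecutive approximants \<open>P\<^sub>n/Q\<^sub>n\<close> and \<open>P\<^sub>n\<^sub>+\<^sub>1/Q\<^sub>n\<^sub>+\<^sub>1\<close>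
  both agree with \<open>f\<close> to order \<open>n + m + 2\<close>, so the polynomial
  \<open>P\<^sub>n Q\<^sub>n\<^sub>+\<^sub>1 - P\<^sub>n\<^sub>+\<^sub>1 Q\<^sub>n\<close>, of degree at most \<open>n + m + 1\<close>,
  vanishes to order \<open>n + m + 2\<close> at the origin and is therefore zero. Hence all
  approximants with \<open>n \<ge> k\<close> are the same rational function \<open>P\<^sub>k/Q\<^sub>k\<close>, and the
  holomorphic function \<open>f Q\<^sub>k - P\<^sub>k\<close> vanishes to every order at the origin;
  by the identity theorem it vanishes near the origin.\<close>

lemma eventually_poly_nonzero_at:
  fixes q :: "'a::real_normed_field poly"
  assumes "q \<noteq> 0"
  shows "eventually (\<lambda>z. poly q z \<noteq> 0) (at x)"
proof -
  have "eventually (\<lambda>z. z \<notin> {z. poly q z = 0}) (at x)"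
    using islimpt_finite[OF poly_roots_finite[OF assms]] islimpt_iff_eventually by blast
  thus ?thesis by simp
qed

lemma vanishes_to_order_mono:
  assumes "vanishes_to_order g N" "M \<le> N"
  shows "vanishes_to_order g M"
proof -
  have "(\<lambda>z::complex. z ^ M * z ^ (N - M)) \<in> O[at 0](\<lambda>z. z ^ M)"
    by (rule landau_o.big_1_mult[OF landau_o.big_refl continuous_imp_bigo_1]) simp
  hence "(\<lambda>z::complex. z ^ N) \<in> O[at 0](\<lambda>z. z ^ M)"
    using assms(2) by (simp flip: power_add)
  with assms(1) show ?thesis
    unfolding vanishes_to_order_def by (rule landau_o.big_trans)
qed

lemma power_mult_vanishes_imp_zero:
  fixes h :: "complex \<Rightarrow> complex"
  assumes "isCont h 0" "j < N" "vanishes_to_order (\<lambda>z. z ^ j * h z) N"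
  shows "h 0 = 0"
proof -
  have "(\<lambda>z. z ^ j * z ^ (N - j)) = (\<lambda>z::complex. z ^ N)"
    using assms(2) by (simp flip: power_add)
  with assms(3) have "(\<lambda>z. z ^ j * h z) \<in> O[at 0](\<lambda>z. z ^ j * z ^ (N - j))"
    by (simp add: vanishes_to_order_def)
  moreover have "eventually (\<lambda>z::complex. z ^ j \<noteq> 0) (at 0)"
    using eventually_neq_at_within[of 0 0 UNIV] by (rule eventually_mono) simp
  ultimately have "h \<in> O[at 0](\<lambda>z. z ^ (N - j))"
    by (subst (asm) landau_o.big.mult_cancel_left) auto
  moreover have "(\<lambda>z::complex. z ^ (N - j)) \<in> o[at 0](\<lambda>_. 1)"
    using assms(2) by (intro smalloI_tendsto) (auto intro!: tendsto_eq_intros)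
  ultimately have "h \<in> o[at 0](\<lambda>_. 1)"
    by (rule landau_o.big_small_trans)
  hence "(h \<longlongrightarrow> 0) (at 0)"
    using smalloD_tendsto by force
  with assms(1) show ?thesis
    by (simp add: isCont_def LIM_unique)
qed

lemma vanishes_to_order_poly_imp_zero:
  assumes "degree p < N" "vanishes_to_order (poly p) N"
  shows "p = 0"
proof (rule ccontr)
  assume "p \<noteq> 0"
  then obtain q where q: "p = [:0, 1:] ^ order 0 p * q" "\<not> [:0, 1:] dvd q"
    using order_decomp[of p 0] by auto
  have "poly p = (\<lambda>z. z ^ order 0 p * poly q z)"
    by (subst q(1)) (simp add: fun_eq_iff poly_power)
  hence "vanishes_to_order (\<lambda>z. z ^ order 0 p * poly q z) N"
    using assms(2) by simp
  moreover have "order 0 p < N"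
    using le_less_trans[OF order_degree[OF \<open>p \<noteq> 0\<close>] assms(1)] .
  ultimately have "poly q 0 = 0"
    by (intro power_mult_vanishes_imp_zero) auto
  with q(2) show False
    by (simp add: poly_eq_0_iff_dvd)
qed

lemma rat_fun_approximants_cross_eq:
  assumes "Q1 \<noteq> 0" "Q2 \<noteq> 0" "degree P1 + degree Q2 < N" "degree P2 + degree Q1 < N"
    and "vanishes_to_order (\<lambda>z. f z - rat_fun P1 Q1 z) N"
    and "vanishes_to_order (\<lambda>z. f z - rat_fun P2 Q2 z) N"
  shows "P1 * Q2 = P2 * Q1"
proof -
  let ?D = "P1 * Q2 - P2 * Q1"
  have "degree ?D < N"
    using assms(3,4) degree_mult_le[of P1 Q2] degree_mult_le[of P2 Q1]
    by (intro degree_diff_less) linarith+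
  have "(\<lambda>z. (f z - rat_fun P2 Q2 z) - (f z - rat_fun P1 Q1 z)) \<in> O[at 0](\<lambda>z. z ^ N)"
    using assms(6,5) unfolding vanishes_to_order_def by (rule sum_in_bigo(2))
  hence "vanishes_to_order
      (\<lambda>z. ((f z - rat_fun P2 Q2 z) - (f z - rat_fun P1 Q1 z)) * poly (Q1 * Q2) z) N"
    unfolding vanishes_to_order_def
    by (rule landau_o.big_1_mult[OF _ continuous_imp_bigo_1]) simp
  moreover have "eventually (\<lambda>z.
      ((f z - rat_fun P2 Q2 z) - (f z - rat_fun P1 Q1 z)) * poly (Q1 * Q2) z = poly ?D z) (at 0)"
    using eventually_poly_nonzero_at[OF assms(1)] eventually_poly_nonzero_at[OF assms(2)]
    by eventually_elim (simp add: rat_fun_def field_simps)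
  ultimately have "vanishes_to_order (poly ?D) N"
    unfolding vanishes_to_order_def by (rule landau_o.big.in_cong[THEN iffD1, rotated])
  with \<open>degree ?D < N\<close> have "?D = 0"
    by (rule vanishes_to_order_poly_imp_zero)
  thus ?thesis
    by simp
qed

lemma consecutive_cross_eq_imp_cross_eq:
  fixes P Q :: "nat \<Rightarrow> 'a::idom"
  assumes "\<And>n. n \<ge> k \<Longrightarrow> Q n \<noteq> 0"
    and "\<And>n. n \<ge> k \<Longrightarrow> P n * Q (Suc n) = P (Suc n) * Q n"
    and "n \<ge> k"
  shows "P k * Q n = P n * Q k"
  using assms(3)
proof (induction n rule: dec_induct)
  case (step n)
  have "Q n * (P k * Q (Suc n)) = Q k * (P n * Q (Suc n))"
    using step.IH by (simp add: mult_ac)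
  also have "\<dots> = Q n * (P (Suc n) * Q k)"
    using assms(2)[OF step.hyps(1)] by (simp add: mult_ac)
  finally show ?case
    using assms(1)[OF step.hyps(1)] by simp
qed simp

lemma vanishes_to_order_clear_denominator:
  assumes "Q' \<noteq> 0" "P * Q' = P' * Q"
    and "vanishes_to_order (\<lambda>z. f z - rat_fun P' Q' z) N"
  shows "vanishes_to_order (\<lambda>z. f z * poly Q z - poly P z) N"
proof -
  have "vanishes_to_order (\<lambda>z. (f z - rat_fun P' Q' z) * poly Q z) N"
    using assms(3) unfolding vanishes_to_order_def
    by (rule landau_o.big_1_mult[OF _ continuous_imp_bigo_1]) simp
  moreover have "eventually
      (\<lambda>z. (f z - rat_fun P' Q' z) * poly Q z = f z * poly Q z - poly P z) (at 0)"
    using eventually_poly_nonzero_at[OF assms(1)]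
  proof eventually_elim
    case (elim z)
    have "poly P z * poly Q' z = poly P' z * poly Q z"
      using arg_cong[OF assms(2), of "\<lambda>p. poly p z"] by simp
    with elim show ?case
      by (simp add: rat_fun_def field_simps)
  qed
  ultimately show ?thesis
    unfolding vanishes_to_order_def by (rule landau_o.big.in_cong[THEN iffD1, rotated])
qed

lemma holomorphic_vanishes_to_all_orders_imp_eventually_zero:
  assumes "g holomorphic_on ball 0 r" "r > 0" "\<And>N. vanishes_to_order g N"
  shows "eventually (\<lambda>z. g z = 0) (at 0)"
proof -
  have near_0: "eventually (\<lambda>z. z \<in> ball 0 e) (at (0::complex))" if "e > 0" for e
    using that by (intro eventually_at_in_open') auto
  have "isCont g 0"
    using holomorphic_on_imp_continuous_on[OF assms(1)] assms(2)
    by (simp add: continuous_on_eq_continuous_at)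
  hence g0: "g 0 = 0"
    using power_mult_vanishes_imp_zero[of g 0 1] assms(3) by simp
  show ?thesis
  proof (cases "g constant_on ball 0 r")
    case True
    hence "\<And>z. z \<in> ball 0 r \<Longrightarrow> g z = 0"
      using g0 assms(2) by (metis centre_in_ball constant_on_def)
    with near_0[OF assms(2)] show ?thesis
      by (auto elim: eventually_mono)
  next
    case False
    obtain h e n where "0 < e" "h holomorphic_on ball 0 e"
        and g_eq: "\<And>w. w \<in> ball 0 e \<Longrightarrow> g w = (w - 0) ^ n * h w"
        and h_nz: "\<And>w. w \<in> ball 0 e \<Longrightarrow> h w \<noteq> 0"
      using holomorphic_factor_zero_nonconstant[OF assms(1) open_ball connected_ball _ g0 False]
        assms(2) by (metis centre_in_ball)
    have "isCont h 0"
      using holomorphic_on_imp_continuous_on[OF \<open>h holomorphic_on ball 0 e\<close>] \<open>0 < e\<close>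
      by (simp add: continuous_on_eq_continuous_at)
    moreover have "vanishes_to_order (\<lambda>z. z ^ n * h z) (Suc n)"
      using assms(3)[of "Suc n"] unfolding vanishes_to_order_def
      by (rule landau_o.big.in_cong[THEN iffD1, rotated])
        (use near_0[OF \<open>0 < e\<close>] in \<open>auto elim: eventually_mono simp: g_eq\<close>)
    ultimately have "h 0 = 0"
      using power_mult_vanishes_imp_zero[of h n "Suc n"] by blast
    with h_nz \<open>0 < e\<close> show ?thesis
      by simp
  qed
qed

theorem proposition3p5:
  fixes f :: "complex \<Rightarrow> complex" and r :: real and m k :: nat
  assumes "r > 0" and "f holomorphic_on ball 0 r"
    and "\<forall>n\<ge>k. \<exists>P Q. in_R n m P Q \<and>
            vanishes_to_order (\<lambda>z. f z - rat_fun P Q z) (n + m + 2)"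
  shows "\<exists>P Q. in_R k m P Q \<and> (\<forall>\<^sub>F z in at 0. f z = rat_fun P Q z)"
proof -
  from assms(3) obtain P Q where PQ: "\<And>n. n \<ge> k \<Longrightarrow> in_R n m (P n) (Q n)"
    and approx: "\<And>n. n \<ge> k \<Longrightarrow>
      vanishes_to_order (\<lambda>z. f z - rat_fun (P n) (Q n) z) (n + m + 2)"
    by metis
  have Q_nz: "Q n \<noteq> 0" if "n \<ge> k" for n
    using PQ[OF that] by (simp add: in_R_def)
  have consecutive: "P n * Q (Suc n) = P (Suc n) * Q n" if "n \<ge> k" for n
  proof (rule rat_fun_approximants_cross_eq)
    show "degree (P n) + degree (Q (Suc n)) < n + m + 2"
      and "degree (P (Suc n)) + degree (Q n) < n + m + 2"
      using PQ[of n] PQ[of "Suc n"] that by (auto simp: in_R_def)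
    show "vanishes_to_order (\<lambda>z. f z - rat_fun (P (Suc n)) (Q (Suc n)) z) (n + m + 2)"
      by (rule vanishes_to_order_mono[OF approx[of "Suc n"]]) (use that in auto)
  qed (use that Q_nz approx in auto)
  have cross: "P k * Q n = P n * Q k" if "n \<ge> k" for n
    using consecutive_cross_eq_imp_cross_eq[where P = P and Q = Q] Q_nz consecutive that
    by blast
  have "vanishes_to_order (\<lambda>z. f z * poly (Q k) z - poly (P k) z) N" for N
    using vanishes_to_order_clear_denominator[OF Q_nz cross approx, of "k + N"]
    by (rule vanishes_to_order_mono) simp_all
  then have "eventually (\<lambda>z. f z * poly (Q k) z - poly (P k) z = 0) (at 0)"
    by (intro holomorphic_vanishes_to_all_orders_imp_eventually_zero[OF _ assms(1)]
        holomorphic_intros assms(2))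
  then have "eventually (\<lambda>z. f z = rat_fun (P k) (Q k) z) (at 0)"
    using eventually_poly_nonzero_at[OF Q_nz[OF order.refl]]
    by eventually_elim (simp add: rat_fun_def field_simps)
  with PQ[OF order.refl] show ?thesis
    by blast
qed

end
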